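(* For each of the equations $Q(x,u,v,y;\alpha,\beta)=0$ listed in the context, with the corresponding polynomial $h$, consider the system of differential equations for functions $x(\xi),u(\xi),v(\xi),y(\xi)$: $$x_\xi u_\xi=h(x,u;\alpha),\quad u_\xi y_\xi=h(u,y;\beta),\quad x_\xi v_\xi=h(x,v;\beta),\quad v_\xi y_\xi=h(v,y;\alpha).$$ Then (i) the equation $Q(x,u,v,y;\alpha,\beta)=0$ is a sufficient condition for the consistency condition $h(x,u;\alpha)h(v,y;\alpha)=h(x,v;\beta)h(u,y;\beta)$ of this system; (ii) $Q=0$ is compatible with the system, i.e. $\big(Q_xx_\xi+Q_uu_\xi+Q_vv_\xi+Q_yy_\xi\big)\big|_{Q=0}=0$ along solutions of the system.
   Context: The equations and polynomials $h$ (with constant $\delta$): (Q1) $\alpha(x-v)(u-y)-\beta(x-u)(v-y)+\delta^2\alpha\beta(\alpha-\beta)=0$, $h=\frac{1}{2\alpha}(x-u)^2-\frac{\delta^2\alpha}{2}$; (Q2) $\alpha(x-v)(u-y)-\beta(x-u)(v-y)+\alpha\beta(\alpha-\beta)(x+u+v+y)-\alpha\beta(\alpha-\beta)(\alpha^2-\alpha\beta+\beta^2)=0$, $h=\frac{1}{4\alpha}(x-u)^2-\frac\alpha2(x+u)+\frac{\alpha^3}{4}$; (Q3) $(\beta^2-\alpha^2)(xy+uv)+\beta(\alpha^2-1)(xu+vy)-\alpha(\beta^2-1)(xv+uy)-\delta^2(\alpha^2-\beta^2)(\alpha^2-1)(\beta^2-1)/(4\alpha\beta)=0$, $h=\frac{\alpha}{1-\alpha^2}(x^2+u^2)-\frac{1+\alpha^2}{1-\alpha^2}xu+\delta^2\frac{1-\alpha^2}{4\alpha}$;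 (Q4) $a_0xuvy+a_1(xuv+uvy+vyx+yxu)+a_2(xy+uv)+\bar a_2(xu+vy)+\tilde a_2(xv+uy)+a_3(x+u+v+y)+a_4=0$ with $r(t)=4t^3-g_2t-g_3$, $a^2=r(\alpha)$, $b^2=r(\beta)$, $a_0=a+b$, $a_1=-\beta a-\alpha b$, $a_2=\beta^2a+\alpha^2b$, $\bar a_2=\frac{ab(a+b)}{2(\alpha-\beta)}+\beta^2a-(2\alpha^2-\frac{g_2}{4})b$, $\tilde a_2=\frac{ab(a+b)}{2(\beta-\alpha)}+\alpha^2b-(2\beta^2-\frac{g_2}{4})a$, $a_3=\frac{g_3}{2}a_0-\frac{g_2}{4}a_1$, $a_4=\frac{g_2^2}{16}a_0-g_3a_1$; $h(x,u;\alpha)=\frac1a\big[(xu+\alpha(x+u)+g_2/4)^2-(x+u+\alpha)(4\alpha xu-g_3)\big]$ (and $h(\cdot,\cdot;\beta)$ uses $b$ in place of $a$); (H2) $(x-y)(u-v)+(\beta-\alpha)(x+u+v+y)+\beta^2-\alpha^2=0$, $h=x+u+\alpha$; (H3) with $\delta\neq0$: $\alpha(xu+vy)-\beta(xv+uy)+\delta(\alpha^2-\beta^2)=0$, $h=xu+\delta\alpha$; (A1) $\alpha(x+v)(u+y)-\beta(x+u)(v+y)-\delta^2\alpha\beta(\alpha-\beta)=0$, $h=\frac{1}{2\alpha}(x+u)^2-\frac{\delta^2\alpha}{2}$; (A2) $(\beta^2-\alpha^2)(xuvy+1)+\beta(\alpha^2-1)(xv+uy)-\alpha(\beta^2-1)(xu+vy)=0$,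 $h=\frac{\alpha}{1-\alpha^2}(x^2u^2+1)-\frac{1+\alpha^2}{1-\alpha^2}xu$. Subscripts denote derivatives. *)

theory Defs
  imports "HOL-Analysis.Analysis"
begin

datatype quad_eq = Q1 | Q2 | Q3 | Q4 | H2 | H3 | A1 | A2

text \<open>Coefficients of Q4; a and b are the chosen square roots a^2 = r(alpha), b^2 = r(beta).\<close>
definition r_Q4 :: "'a::field \<Rightarrow> 'a \<Rightarrow> 'a \<Rightarrow> 'a" where
  "r_Q4 g2 g3 t = 4 * t ^ 3 - g2 * t - g3"

fun quadQ :: "quad_eq \<Rightarrow> 'a::field \<Rightarrow> 'a \<Rightarrow> 'a \<Rightarrow> 'a \<Rightarrow> 'a \<Rightarrow> 'a \<Rightarrow> 'a
               \<Rightarrow> 'a \<Rightarrow> 'a \<Rightarrow> 'a \<Rightarrow> 'a \<Rightarrow> 'a" where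
  "quadQ Q1 \<delta> g2 g3 a b \<alpha> \<beta> x u v y =
     \<alpha> * (x - v) * (u - y) - \<beta> * (x - u) * (v - y) + \<delta>^2 * \<alpha> * \<beta> * (\<alpha> - \<beta>)"
| "quadQ Q2 \<delta> g2 g3 a b \<alpha> \<beta> x u v y =
     \<alpha> * (x - v) * (u - y) - \<beta> * (x - u) * (v - y) + \<alpha> * \<beta> * (\<alpha> - \<beta>) * (x + u + v + y)
     - \<alpha> * \<beta> * (\<alpha> - \<beta>) * (\<alpha>^2 - \<alpha> * \<beta> + \<beta>^2)"
| "quadQ Q3 \<delta> g2 g3 a b \<alpha> \<beta> x u v y =
     (\<beta>^2 - \<alpha>^2) * (x * y + u * v) + \<beta> * (\<alpha>^2 - 1) * (x * u + v * y)
     - \<alpha> * (\<beta>^2 - 1) * (x * v + u * y)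
     - \<delta>^2 * (\<alpha>^2 - \<beta>^2) * (\<alpha>^2 - 1) * (\<beta>^2 - 1) / (4 * \<alpha> * \<beta>)"
| "quadQ Q4 \<delta> g2 g3 a b \<alpha> \<beta> x u v y =
     (let a0 = a + b;
          a1 = - \<beta> * a - \<alpha> * b;
          a2 = \<beta>^2 * a + \<alpha>^2 * b;
          a2' = a * b * (a + b) / (2 * (\<alpha> - \<beta>)) + \<beta>^2 * a - (2 * \<alpha>^2 - g2 / 4) * b;
          a2'' = a * b * (a + b) / (2 * (\<beta> - \<alpha>)) + \<alpha>^2 * b - (2 * \<beta>^2 - g2 / 4) * a;
          a3 = g3 / 2 * a0 - g2 / 4 * a1;
          a4 = g2^2 / 16 * a0 - g3 * a1
      in a0 * x * u * v * y + a1 * (x * u * v + u * v * y + v * y * x + y * x * u)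
         + a2 * (x * y + u * v) + a2' * (x * u + v * y) + a2'' * (x * v + u * y)
         + a3 * (x + u + v + y) + a4)"
| "quadQ H2 \<delta> g2 g3 a b \<alpha> \<beta> x u v y =
     (x - y) * (u - v) + (\<beta> - \<alpha>) * (x + u + v + y) + \<beta>^2 - \<alpha>^2"
| "quadQ H3 \<delta> g2 g3 a b \<alpha> \<beta> x u v y =
     \<alpha> * (x * u + v * y) - \<beta> * (x * v + u * y) + \<delta> * (\<alpha>^2 - \<beta>^2)"
| "quadQ A1 \<delta> g2 g3 a b \<alpha> \<beta> x u v y =
     \<alpha> * (x + v) * (u + y) - \<beta> * (x + u) * (v + y) - \<delta>^2 * \<alpha> * \<beta> * (\<alpha> - \<beta>)"
| "quadQ A2 \<delta> g2 g3 a b \<alpha> \<beta> x u v y =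
     (\<beta>^2 - \<alpha>^2) * (x * u * v * y + 1) + \<beta> * (\<alpha>^2 - 1) * (x * v + u * y)
     - \<alpha> * (\<beta>^2 - 1) * (x * u + v * y)"

text \<open>quadh E delta g2 g3 s x u alpha  is  h(x,u;alpha); for Q4, s is the square root
  belonging to the lattice parameter (s = a for alpha, s = b for beta); otherwise s is ignored.\<close>
fun quadh :: "quad_eq \<Rightarrow> 'a::field \<Rightarrow> 'a \<Rightarrow> 'a \<Rightarrow> 'a \<Rightarrow> 'a \<Rightarrow> 'a \<Rightarrow> 'a \<Rightarrow> 'a" where
  "quadh Q1 \<delta> g2 g3 s x u \<alpha> = (x - u)^2 / (2 * \<alpha>) - \<delta>^2 * \<alpha> / 2"
| "quadh Q2 \<delta> g2 g3 s x u \<alpha> = (x - u)^2 / (4 * \<alpha>) - \<alpha> / 2 * (x + u) + \<alpha>^3 / 4"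
| "quadh Q3 \<delta> g2 g3 s x u \<alpha> =
     \<alpha> / (1 - \<alpha>^2) * (x^2 + u^2) - (1 + \<alpha>^2) / (1 - \<alpha>^2) * x * u + \<delta>^2 * (1 - \<alpha>^2) / (4 * \<alpha>)"
| "quadh Q4 \<delta> g2 g3 s x u \<alpha> =
     ((x * u + \<alpha> * (x + u) + g2 / 4)^2 - (x + u + \<alpha>) * (4 * \<alpha> * x * u - g3)) / s"
| "quadh H2 \<delta> g2 g3 s x u \<alpha> = x + u + \<alpha>"
| "quadh H3 \<delta> g2 g3 s x u \<alpha> = x * u + \<delta> * \<alpha>"
| "quadh A1 \<delta> g2 g3 s x u \<alpha> = (x + u)^2 / (2 * \<alpha>) - \<delta>^2 * \<alpha> / 2"
| "quadh A2 \<delta> g2 g3 s x u \<alpha> =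
     \<alpha> / (1 - \<alpha>^2) * (x^2 * u^2 + 1) - (1 + \<alpha>^2) / (1 - \<alpha>^2) * x * u"

text \<open>Standing non-degeneracy conditions: all denominators occurring in Q and h are nonzero,
  delta is nonzero for H3, and for Q4 a, b are square roots of r(alpha), r(beta).\<close>
fun quad_admissible :: "quad_eq \<Rightarrow> 'a::field \<Rightarrow> 'a \<Rightarrow> 'a \<Rightarrow> 'a \<Rightarrow> 'a \<Rightarrow> 'a \<Rightarrow> 'a \<Rightarrow> bool" where
  "quad_admissible Q1 \<delta> g2 g3 a b \<alpha> \<beta> = (\<alpha> \<noteq> 0 \<and> \<beta> \<noteq> 0)"
| "quad_admissible Q2 \<delta> g2 g3 a b \<alpha> \<beta> = (\<alpha> \<noteq> 0 \<and> \<beta> \<noteq> 0)"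
| "quad_admissible Q3 \<delta> g2 g3 a b \<alpha> \<beta> = (\<alpha> \<noteq> 0 \<and> \<beta> \<noteq> 0 \<and> \<alpha>^2 \<noteq> 1 \<and> \<beta>^2 \<noteq> 1)"
| "quad_admissible Q4 \<delta> g2 g3 a b \<alpha> \<beta> =
     (a^2 = r_Q4 g2 g3 \<alpha> \<and> b^2 = r_Q4 g2 g3 \<beta> \<and> a \<noteq> 0 \<and> b \<noteq> 0 \<and> \<alpha> \<noteq> \<beta>)"
| "quad_admissible H2 \<delta> g2 g3 a b \<alpha> \<beta> = True"
| "quad_admissible H3 \<delta> g2 g3 a b \<alpha> \<beta> = (\<delta> \<noteq> 0)"
| "quad_admissible A1 \<delta> g2 g3 a b \<alpha> \<beta> = (\<alpha> \<noteq> 0 \<and> \<beta> \<noteq> 0)"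
| "quad_admissible A2 \<delta> g2 g3 a b \<alpha> \<beta> = (\<alpha>^2 \<noteq> 1 \<and> \<beta>^2 \<noteq> 1)"

end

theory Submission
  imports Defs
begin

text \<open>
  A quad-equation Q is affine in each of x, u, v, y, so Q_x = Q(1,u,v,y) - Q(0,u,v,y) etc.
  Multiplying Q_x x' + Q_u u' + Q_v v' + Q_y y' by x' u' and using the system gives
  x' (Q_x h(x,u;\<alpha>) + Q_y h(u,y;\<beta>)) + u' (Q_u h(x,u;\<alpha>) + Q_v h(x,v;\<beta>)), so (ii) reduces to
  these two relations at the vertices u and x; the second one is the first one for the reflected
  quadrilateral (u,x,y,v), under which Q is invariant. Once h is written as a fraction, the
  consistency condition and the relation at u are polynomial identities modulo the numerator
  of Q, and Groebner bases find the cofactors. On a^2 = r(\<alpha>), b^2 = r(\<beta>) we have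
  Q = (a P - b P') / (32 (\<alpha> - \<beta>)) with P, P' free of a and b, so Q = 0 gives
  r(\<alpha>) P^2 = r(\<beta>) P'^2, and the norm identity
  r(\<alpha>) P^2 - r(\<beta>) P'^2 = 4 (\<alpha> - \<beta>)^2 (r(\<alpha>) H(x,v;\<beta>) H(u,y;\<beta>) - r(\<beta>) H(x,u;\<alpha>) H(v,y;\<alpha>)),
  where H = 16 a h(.,.;\<alpha>) and H = 16 b h(.,.;\<beta>), turns this into the consistency condition.
\<close>

definition slope :: "('a::ring_1 \<Rightarrow> 'a) \<Rightarrow> 'a" where
  "slope f = f 1 - f 0"

lemma slope_linear: "slope (\<lambda>t. a * f t - b * g t) = a * slope f - b * slope g"
  by (simp add: slope_def algebra_simps)

lemma deriv_affine:
  fixes f :: "'a::real_normed_field \<Rightarrow> 'a"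
  assumes "\<And>t. f t = f 0 + t * slope f"
  shows "deriv f z = slope f"
proof -
  have "((\<lambda>t. f 0 + t * slope f) has_field_derivative slope f) (at z)"
    by (auto intro!: derivative_eq_intros)
  then show ?thesis
    by (subst (asm) assms[symmetric]) (simp add: DERIV_imp_deriv)
qed

lemma quadQ_affine:
  "quadQ E \<delta> g2 g3 a b \<alpha> \<beta> t u v y
    = quadQ E \<delta> g2 g3 a b \<alpha> \<beta> 0 u v y + t * slope (\<lambda>t. quadQ E \<delta> g2 g3 a b \<alpha> \<beta> t u v y)"
  "quadQ E \<delta> g2 g3 a b \<alpha> \<beta> x t v y
    = quadQ E \<delta> g2 g3 a b \<alpha> \<beta> x 0 v y + t * slope (\<lambda>t. quadQ E \<delta> g2 g3 a b \<alpha> \<beta> x t v y)"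
  "quadQ E \<delta> g2 g3 a b \<alpha> \<beta> x u t y
    = quadQ E \<delta> g2 g3 a b \<alpha> \<beta> x u 0 y + t * slope (\<lambda>t. quadQ E \<delta> g2 g3 a b \<alpha> \<beta> x u t y)"
  "quadQ E \<delta> g2 g3 a b \<alpha> \<beta> x u v t
    = quadQ E \<delta> g2 g3 a b \<alpha> \<beta> x u v 0 + t * slope (\<lambda>t. quadQ E \<delta> g2 g3 a b \<alpha> \<beta> x u v t)"
  by (cases E; simp add: slope_def Let_def algebra_simps)+

lemma deriv_quadQ:
  fixes x u v y :: "'a::real_normed_field"
  shows "deriv (\<lambda>t. quadQ E \<delta> g2 g3 a b \<alpha> \<beta> t u v y) x
      = slope (\<lambda>t. quadQ E \<delta> g2 g3 a b \<alpha> \<beta> t u v y)"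
    and "deriv (\<lambda>t. quadQ E \<delta> g2 g3 a b \<alpha> \<beta> x t v y) u
      = slope (\<lambda>t. quadQ E \<delta> g2 g3 a b \<alpha> \<beta> x t v y)"
    and "deriv (\<lambda>t. quadQ E \<delta> g2 g3 a b \<alpha> \<beta> x u t y) v
      = slope (\<lambda>t. quadQ E \<delta> g2 g3 a b \<alpha> \<beta> x u t y)"
    and "deriv (\<lambda>t. quadQ E \<delta> g2 g3 a b \<alpha> \<beta> x u v t) y
      = slope (\<lambda>t. quadQ E \<delta> g2 g3 a b \<alpha> \<beta> x u v t)"
  by (rule deriv_affine, rule quadQ_affine)+

lemma quadQ_reflect: "quadQ E \<delta> g2 g3 a b \<alpha> \<beta> u x y v = quadQ E \<delta> g2 g3 a b \<alpha> \<beta> x u v y"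
  by (cases E) (simp_all add: Let_def algebra_simps)

lemma quadh_commute: "quadh E \<delta> g2 g3 s q p \<alpha> = quadh E \<delta> g2 g3 s p q \<alpha>"
  by (cases E) (simp_all add: algebra_simps power2_commute)

definition quad_compatible ::
    "('a::field \<Rightarrow> 'a \<Rightarrow> 'a \<Rightarrow> 'a \<Rightarrow> 'a) \<Rightarrow> ('a \<Rightarrow> 'a \<Rightarrow> 'a) \<Rightarrow> ('a \<Rightarrow> 'a \<Rightarrow> 'a) \<Rightarrow> bool" where
  "quad_compatible Q h\<^sub>\<alpha> h\<^sub>\<beta> \<longleftrightarrow> (\<forall>x u v y. Q x u v y = 0 \<longrightarrow>
     h\<^sub>\<alpha> x u * h\<^sub>\<alpha> v y = h\<^sub>\<beta> x v * h\<^sub>\<beta> u y \<and>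
     slope (\<lambda>t. Q t u v y) * h\<^sub>\<alpha> x u + slope (\<lambda>t. Q x u v t) * h\<^sub>\<beta> u y = 0)"

lemma quad_compatible_at_x:
  assumes "quad_compatible Q h\<^sub>\<alpha> h\<^sub>\<beta>" and "Q x u v y = 0"
    and reflect: "\<And>x u v y. Q u x y v = Q x u v y"
    and "\<And>p q. h\<^sub>\<alpha> q p = h\<^sub>\<alpha> p q" and "\<And>p q. h\<^sub>\<beta> q p = h\<^sub>\<beta> p q"
  shows "slope (\<lambda>t. Q x t v y) * h\<^sub>\<alpha> x u + slope (\<lambda>t. Q x u t y) * h\<^sub>\<beta> x v = 0"
proof -
  have "Q u x y v = 0" using assms(2) by (simp add: reflect)
  with assms(1) have "slope (\<lambda>t. Q t x y v) * h\<^sub>\<alpha> u x + slope (\<lambda>t. Q u x y t) * h\<^sub>\<beta> x v = 0"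
    unfolding quad_compatible_def by blast
  then show ?thesis by (simp add: reflect assms(4))
qed

lemma quad_compatible_of_fractions:
  fixes Q N :: "'a::field \<Rightarrow> 'a \<Rightarrow> 'a \<Rightarrow> 'a \<Rightarrow> 'a"
  assumes "c \<noteq> 0" "d\<^sub>\<alpha> \<noteq> 0" "d\<^sub>\<beta> \<noteq> 0"
    and Q: "\<And>x u v y. Q x u v y = N x u v y / c"
    and h\<^sub>\<alpha>: "\<And>p q. h\<^sub>\<alpha> p q = H\<^sub>\<alpha> p q / d\<^sub>\<alpha>"
    and h\<^sub>\<beta>: "\<And>p q. h\<^sub>\<beta> p q = H\<^sub>\<beta> p q / d\<^sub>\<beta>"
    and consistency: "\<And>x u v y. N x u v y = 0 \<Longrightarrow>
      H\<^sub>\<alpha> x u * H\<^sub>\<alpha> v y * d\<^sub>\<beta>^2 = H\<^sub>\<beta> x v * H\<^sub>\<beta> u y * d\<^sub>\<alpha>^2"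
    and at_u: "\<And>x u v y. N x u v y = 0 \<Longrightarrow>
      slope (\<lambda>t. N t u v y) * H\<^sub>\<alpha> x u * d\<^sub>\<beta> + slope (\<lambda>t. N x u v t) * H\<^sub>\<beta> u y * d\<^sub>\<alpha> = 0"
  shows "quad_compatible Q h\<^sub>\<alpha> h\<^sub>\<beta>"
  unfolding quad_compatible_def slope_def Q h\<^sub>\<alpha> h\<^sub>\<beta>
proof (intro allI impI conjI)
  fix x u v y
  assume "N x u v y / c = 0"
  with \<open>c \<noteq> 0\<close> have N: "N x u v y = 0" by simp
  show "H\<^sub>\<alpha> x u / d\<^sub>\<alpha> * (H\<^sub>\<alpha> v y / d\<^sub>\<alpha>) = H\<^sub>\<beta> x v / d\<^sub>\<beta> * (H\<^sub>\<beta> u y / d\<^sub>\<beta>)"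
    using consistency[OF N] assms(2,3) by (simp add: field_simps power2_eq_square)
  have "(N 1 u v y / c - N 0 u v y / c) * (H\<^sub>\<alpha> x u / d\<^sub>\<alpha>) + (N x u v 1 / c - N x u v 0 / c) * (H\<^sub>\<beta> u y / d\<^sub>\<beta>)
      = ((N 1 u v y - N 0 u v y) * H\<^sub>\<alpha> x u * d\<^sub>\<beta> + (N x u v 1 - N x u v 0) * H\<^sub>\<beta> u y * d\<^sub>\<alpha>) / (c * d\<^sub>\<alpha> * d\<^sub>\<beta>)"
    using assms(1-3) by (simp add: field_simps)
  then show "(N 1 u v y / c - N 0 u v y / c) * (H\<^sub>\<alpha> x u / d\<^sub>\<alpha>) + (N x u v 1 / c - N x u v 0 / c) * (H\<^sub>\<beta> u y / d\<^sub>\<beta>) = 0"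
    using at_u[OF N] by (simp add: slope_def)
qed

lemma quad_compatible_Q1:
  fixes \<alpha> \<beta> :: "'a::field_char_0"
  assumes "\<alpha> \<noteq> 0" "\<beta> \<noteq> 0"
  shows "quad_compatible (quadQ Q1 \<delta> g2 g3 a b \<alpha> \<beta>)
    (\<lambda>p q. quadh Q1 \<delta> g2 g3 a p q \<alpha>) (\<lambda>p q. quadh Q1 \<delta> g2 g3 b p q \<beta>)"
  by (rule quad_compatible_of_fractions[where c = 1 and N = "quadQ Q1 \<delta> g2 g3 a b \<alpha> \<beta>"
        and H\<^sub>\<alpha> = "\<lambda>p q. (p - q)^2 - \<delta>^2 * \<alpha>^2" and d\<^sub>\<alpha> = "2 * \<alpha>"
        and H\<^sub>\<beta> = "\<lambda>p q. (p - q)^2 - \<delta>^2 * \<beta>^2" and d\<^sub>\<beta> = "2 * \<beta>"])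
     (use assms in \<open>simp_all add: slope_def field_simps power2_eq_square\<close>; algebra)+

lemma quad_compatible_Q2:
  fixes \<alpha> \<beta> :: "'a::field_char_0"
  assumes "\<alpha> \<noteq> 0" "\<beta> \<noteq> 0"
  shows "quad_compatible (quadQ Q2 \<delta> g2 g3 a b \<alpha> \<beta>)
    (\<lambda>p q. quadh Q2 \<delta> g2 g3 a p q \<alpha>) (\<lambda>p q. quadh Q2 \<delta> g2 g3 b p q \<beta>)"
  by (rule quad_compatible_of_fractions[where c = 1 and N = "quadQ Q2 \<delta> g2 g3 a b \<alpha> \<beta>"
        and H\<^sub>\<alpha> = "\<lambda>p q. (p - q)^2 - 2 * \<alpha>^2 * (p + q) + \<alpha>^4" and d\<^sub>\<alpha> = "4 * \<alpha>"
        and H\<^sub>\<beta> = "\<lambda>p q. (p - q)^2 - 2 * \<beta>^2 * (p + q) + \<beta>^4" and d\<^sub>\<beta> = "4 * \<beta>"])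
     (use assms in \<open>simp_all add: slope_def field_simps power2_eq_square\<close>; algebra)+

lemma quadQ_Q3_eq:
  fixes \<alpha> \<beta> :: "'a::field_char_0"
  assumes "\<alpha> \<noteq> 0" "\<beta> \<noteq> 0"
  shows "quadQ Q3 \<delta> g2 g3 a b \<alpha> \<beta> x u v y =
    (4 * \<alpha> * \<beta> * ((\<beta>^2 - \<alpha>^2) * (x * y + u * v) + \<beta> * (\<alpha>^2 - 1) * (x * u + v * y)
       - \<alpha> * (\<beta>^2 - 1) * (x * v + u * y)) - \<delta>^2 * (\<alpha>^2 - \<beta>^2) * (\<alpha>^2 - 1) * (\<beta>^2 - 1))
    / (4 * \<alpha> * \<beta>)"
  using assms by (simp add: field_simps)

lemma quadh_Q3_eq:
  fixes \<alpha> :: "'a::field_char_0"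
  assumes "\<alpha> \<noteq> 0" "\<alpha>^2 \<noteq> 1"
  shows "quadh Q3 \<delta> g2 g3 s p q \<alpha> =
    (4 * \<alpha>^2 * (p^2 + q^2) - 4 * \<alpha> * (1 + \<alpha>^2) * p * q + \<delta>^2 * (1 - \<alpha>^2)^2) / (4 * \<alpha> * (1 - \<alpha>^2))"
proof -
  define w where "w = 1 - \<alpha>^2"
  have "w \<noteq> 0" using assms(2) by (simp add: w_def)
  with assms(1) have "\<alpha> / w * (p^2 + q^2) - (1 + \<alpha>^2) / w * p * q + \<delta>^2 * w / (4 * \<alpha>) =
    (4 * \<alpha>^2 * (p^2 + q^2) - 4 * \<alpha> * (1 + \<alpha>^2) * p * q + \<delta>^2 * w^2) / (4 * \<alpha> * w)"
    by (simp add: field_simps power2_eq_square)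
  then show ?thesis by (simp add: w_def)
qed

lemma quad_compatible_Q3:
  fixes \<alpha> \<beta> :: "'a::field_char_0"
  assumes "\<alpha> \<noteq> 0" "\<beta> \<noteq> 0" "\<alpha>^2 \<noteq> 1" "\<beta>^2 \<noteq> 1"
  shows "quad_compatible (quadQ Q3 \<delta> g2 g3 a b \<alpha> \<beta>)
    (\<lambda>p q. quadh Q3 \<delta> g2 g3 a p q \<alpha>) (\<lambda>p q. quadh Q3 \<delta> g2 g3 b p q \<beta>)"
  by (rule quad_compatible_of_fractions[OF _ _ _ quadQ_Q3_eq quadh_Q3_eq quadh_Q3_eq])
     (use assms in \<open>simp_all add: slope_def\<close>; algebra)+

lemma quad_compatible_H2:
  fixes \<alpha> \<beta> :: "'a::field_char_0"
  shows "quad_compatible (quadQ H2 \<delta> g2 g3 a b \<alpha> \<beta>)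
    (\<lambda>p q. quadh H2 \<delta> g2 g3 a p q \<alpha>) (\<lambda>p q. quadh H2 \<delta> g2 g3 b p q \<beta>)"
  unfolding quad_compatible_def slope_def by (simp; algebra)

lemma quad_compatible_H3:
  fixes \<alpha> \<beta> :: "'a::field_char_0"
  shows "quad_compatible (quadQ H3 \<delta> g2 g3 a b \<alpha> \<beta>)
    (\<lambda>p q. quadh H3 \<delta> g2 g3 a p q \<alpha>) (\<lambda>p q. quadh H3 \<delta> g2 g3 b p q \<beta>)"
  unfolding quad_compatible_def slope_def by (simp; algebra)

lemma quad_compatible_A1:
  fixes \<alpha> \<beta> :: "'a::field_char_0"
  assumes "\<alpha> \<noteq> 0" "\<beta> \<noteq> 0"
  shows "quad_compatible (quadQ A1 \<delta> g2 g3 a b \<alpha> \<beta>)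
    (\<lambda>p q. quadh A1 \<delta> g2 g3 a p q \<alpha>) (\<lambda>p q. quadh A1 \<delta> g2 g3 b p q \<beta>)"
  by (rule quad_compatible_of_fractions[where c = 1 and N = "quadQ A1 \<delta> g2 g3 a b \<alpha> \<beta>"
        and H\<^sub>\<alpha> = "\<lambda>p q. (p + q)^2 - \<delta>^2 * \<alpha>^2" and d\<^sub>\<alpha> = "2 * \<alpha>"
        and H\<^sub>\<beta> = "\<lambda>p q. (p + q)^2 - \<delta>^2 * \<beta>^2" and d\<^sub>\<beta> = "2 * \<beta>"])
     (use assms in \<open>simp_all add: slope_def field_simps power2_eq_square\<close>; algebra)+

lemma quadh_A2_eq:
  fixes \<alpha> :: "'a::field_char_0"
  assumes "\<alpha>^2 \<noteq> 1"
  shows "quadh A2 \<delta> g2 g3 s p q \<alpha> = (\<alpha> * (p^2 * q^2 + 1) - (1 + \<alpha>^2) * p * q) / (1 - \<alpha>^2)"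
  using assms by (simp add: diff_divide_distrib)

lemma quad_compatible_A2:
  fixes \<alpha> \<beta> :: "'a::field_char_0"
  assumes "\<alpha>^2 \<noteq> 1" "\<beta>^2 \<noteq> 1"
  shows "quad_compatible (quadQ A2 \<delta> g2 g3 a b \<alpha> \<beta>)
    (\<lambda>p q. quadh A2 \<delta> g2 g3 a p q \<alpha>) (\<lambda>p q. quadh A2 \<delta> g2 g3 b p q \<beta>)"
  by (rule quad_compatible_of_fractions[where c = 1 and N = "quadQ A2 \<delta> g2 g3 a b \<alpha> \<beta>",
        OF _ _ _ _ quadh_A2_eq quadh_A2_eq])
     (use assms in \<open>simp_all add: slope_def\<close>; algebra)+

definition Q4_biquadratic :: "'a::field \<Rightarrow> 'a \<Rightarrow> 'a \<Rightarrow> 'a \<Rightarrow> 'a \<Rightarrow> 'a" where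
  "Q4_biquadratic g2 g3 p q \<alpha> = (4 * p * q + 4 * \<alpha> * (p + q) + g2)^2 - 16 * (p + q + \<alpha>) * (4 * \<alpha> * p * q - g3)"

definition Q4_biquadratic_dp :: "'a::field \<Rightarrow> 'a \<Rightarrow> 'a \<Rightarrow> 'a \<Rightarrow> 'a \<Rightarrow> 'a" where
  "Q4_biquadratic_dp g2 g3 p q \<alpha> = 32 * p * (q - \<alpha>)^2 - 32 * \<alpha> * q * (q + \<alpha>) + 8 * g2 * (q + \<alpha>) + 16 * g3"

definition Q4_component :: "'a::field \<Rightarrow> 'a \<Rightarrow> 'a \<Rightarrow> 'a \<Rightarrow> 'a \<Rightarrow> 'a \<Rightarrow> 'a \<Rightarrow> 'a" where
  "Q4_component g2 g3 \<beta> x u v y =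
     16 * x * u * v * y - 16 * \<beta> * (x * u * v + u * v * y + v * y * x + y * x * u)
     + 16 * \<beta>^2 * (x * y + u * v + x * u + v * y) - (32 * \<beta>^2 - 4 * g2) * (x * v + u * y)
     + (8 * g3 + 4 * g2 * \<beta>) * (x + u + v + y) + g2^2 + 16 * g3 * \<beta>"

definition Q4_part :: "'a::field \<Rightarrow> 'a \<Rightarrow> 'a \<Rightarrow> 'a \<Rightarrow> 'a \<Rightarrow> 'a \<Rightarrow> 'a \<Rightarrow> 'a \<Rightarrow> 'a" where
  "Q4_part g2 g3 \<alpha> \<beta> x u v y =
     2 * (\<alpha> - \<beta>) * Q4_component g2 g3 \<beta> x u v y + 16 * r_Q4 g2 g3 \<beta> * (x - y) * (u - v)"

lemma quadh_Q4_eq: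
  fixes \<alpha> :: "'a::field_char_0"
  shows "quadh Q4 \<delta> g2 g3 s p q \<alpha> = Q4_biquadratic g2 g3 p q \<alpha> / (16 * s)"
  by (simp add: Q4_biquadratic_def field_simps power2_eq_square)

lemma quadQ_Q4_decompose:
  fixes \<alpha> \<beta> :: "'a::field_char_0"
  shows "quadQ Q4 \<delta> g2 g3 a b \<alpha> \<beta> x u v y
    = (a * Q4_component g2 g3 \<beta> x u v y + b * Q4_component g2 g3 \<alpha> x v u y) / 16
      + a * b * (a + b) / (2 * (\<alpha> - \<beta>)) * ((x - y) * (u - v))"
proof -
  define w where "w = a * b * (a + b) / (2 * (\<alpha> - \<beta>))"
  have "2 * (\<beta> - \<alpha>) = - (2 * (\<alpha> - \<beta>))" by simp
  then have "a * b * (a + b) / (2 * (\<beta> - \<alpha>)) = - w"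
    unfolding w_def by (simp only: divide_minus_right)
  then show ?thesis
    unfolding quadQ.simps Let_def w_def[symmetric] Q4_component_def by (simp add: field_simps)
qed

lemma quadQ_Q4_eq:
  fixes \<alpha> \<beta> :: "'a::field_char_0"
  assumes "a^2 = r_Q4 g2 g3 \<alpha>" "b^2 = r_Q4 g2 g3 \<beta>" "\<alpha> \<noteq> \<beta>"
  shows "quadQ Q4 \<delta> g2 g3 a b \<alpha> \<beta> x u v y
    = (a * Q4_part g2 g3 \<alpha> \<beta> x u v y - b * Q4_part g2 g3 \<beta> \<alpha> x v u y) / (32 * (\<alpha> - \<beta>))"
proof -
  have "a * b * (a + b) = b * r_Q4 g2 g3 \<alpha> + a * r_Q4 g2 g3 \<beta>"
    by (simp flip: assms(1,2) add: power2_eq_square algebra_simps)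
  moreover have "\<alpha> - \<beta> \<noteq> 0" using assms(3) by simp
  ultimately show ?thesis
    unfolding quadQ_Q4_decompose Q4_part_def by (simp add: field_simps)
qed

lemma Q4_part_norm:
  "r_Q4 g2 g3 \<alpha> * (Q4_part g2 g3 \<alpha> \<beta> x u v y)^2 - r_Q4 g2 g3 \<beta> * (Q4_part g2 g3 \<beta> \<alpha> x v u y)^2
    = 4 * (\<alpha> - \<beta>)^2 * (r_Q4 g2 g3 \<alpha> * Q4_biquadratic g2 g3 x v \<beta> * Q4_biquadratic g2 g3 u y \<beta>
      - r_Q4 g2 g3 \<beta> * Q4_biquadratic g2 g3 x u \<alpha> * Q4_biquadratic g2 g3 v y \<alpha>)"
  for \<alpha> :: "'a::field_char_0"
  unfolding Q4_part_def Q4_component_def Q4_biquadratic_def r_Q4_def by algebra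

lemma Q4_part_vertex:
  fixes \<alpha> \<beta> :: "'a::field_char_0"
  shows "2 * (slope (\<lambda>t. Q4_part g2 g3 \<alpha> \<beta> t u v y) * Q4_biquadratic g2 g3 x u \<alpha>
         - slope (\<lambda>t. Q4_part g2 g3 \<beta> \<alpha> x v u t) * Q4_biquadratic g2 g3 u y \<beta>)
       = Q4_part g2 g3 \<alpha> \<beta> x u v y * Q4_biquadratic_dp g2 g3 x u \<alpha>
         - Q4_part g2 g3 \<beta> \<alpha> x v u y * Q4_biquadratic_dp g2 g3 y u \<beta>"
    and "2 * (r_Q4 g2 g3 \<alpha> * slope (\<lambda>t. Q4_part g2 g3 \<alpha> \<beta> x u v t) * Q4_biquadratic g2 g3 u y \<beta>
         - r_Q4 g2 g3 \<beta> * slope (\<lambda>t. Q4_part g2 g3 \<beta> \<alpha> t v u y) * Q4_biquadratic g2 g3 x u \<alpha>)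
       = r_Q4 g2 g3 \<alpha> * Q4_part g2 g3 \<alpha> \<beta> x u v y * Q4_biquadratic_dp g2 g3 y u \<beta>
         - r_Q4 g2 g3 \<beta> * Q4_part g2 g3 \<beta> \<alpha> x v u y * Q4_biquadratic_dp g2 g3 x u \<alpha>"
  unfolding slope_def Q4_part_def Q4_component_def Q4_biquadratic_def Q4_biquadratic_dp_def r_Q4_def
  by algebra+

lemma conjugate_consistency:
  fixes a b :: "'a::field_char_0"
  assumes "a * P - b * P' = 0" "a^2 = r\<^sub>\<alpha>" "b^2 = r\<^sub>\<beta>" "c \<noteq> 0"
    and "r\<^sub>\<alpha> * P^2 - r\<^sub>\<beta> * P'^2 = c * (r\<^sub>\<alpha> * K * K' - r\<^sub>\<beta> * H * H')"
  shows "b^2 * (H * H') = a^2 * (K * K')"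
  using assms by algebra

lemma conjugate_vertex_relation:
  fixes a b :: "'a::field_char_0"
  assumes "a * P - b * P' = 0" "a^2 = r\<^sub>\<alpha>" "b^2 = r\<^sub>\<beta>"
    and "2 * (P\<^sub>x * H - P'\<^sub>y * K) = P * H\<^sub>p - P' * K\<^sub>p"
    and "2 * (r\<^sub>\<alpha> * P\<^sub>y * K - r\<^sub>\<beta> * P'\<^sub>x * H) = r\<^sub>\<alpha> * P * K\<^sub>p - r\<^sub>\<beta> * P' * H\<^sub>p"
  shows "(a * P\<^sub>x - b * P'\<^sub>x) * H * b + (a * P\<^sub>y - b * P'\<^sub>y) * K * a = 0"
  using assms by algebra

lemma quad_compatible_Q4:
  fixes \<alpha> \<beta> :: "'a::field_char_0"
  assumes ha: "a^2 = r_Q4 g2 g3 \<alpha>" and hb: "b^2 = r_Q4 g2 g3 \<beta>" and "a \<noteq> 0" "b \<noteq> 0" "\<alpha> \<noteq> \<beta>"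
  shows "quad_compatible (quadQ Q4 \<delta> g2 g3 a b \<alpha> \<beta>)
    (\<lambda>p q. quadh Q4 \<delta> g2 g3 a p q \<alpha>) (\<lambda>p q. quadh Q4 \<delta> g2 g3 b p q \<beta>)"
proof (rule quad_compatible_of_fractions[OF _ _ _ quadQ_Q4_eq[OF ha hb \<open>\<alpha> \<noteq> \<beta>\<close>] quadh_Q4_eq quadh_Q4_eq],
    goal_cases)
  case 4
  have "4 * (\<alpha> - \<beta>)^2 \<noteq> 0" using \<open>\<alpha> \<noteq> \<beta>\<close> by simp
  from conjugate_consistency[OF 4 ha hb this Q4_part_norm] show ?case by algebra
next
  case 5
  from conjugate_vertex_relation[OF 5 ha hb Q4_part_vertex] show ?case
    unfolding slope_linear by algebra
qed (use assms in simp_all)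

lemma quad_compatible_quadQ:
  fixes \<alpha> \<beta> :: "'a::field_char_0"
  assumes "quad_admissible E \<delta> g2 g3 a b \<alpha> \<beta>"
  shows "quad_compatible (quadQ E \<delta> g2 g3 a b \<alpha> \<beta>)
    (\<lambda>p q. quadh E \<delta> g2 g3 a p q \<alpha>) (\<lambda>p q. quadh E \<delta> g2 g3 b p q \<beta>)"
  using assms
  by (cases E) (auto simp del: quadQ.simps quadh.simps intro: quad_compatible_Q1 quad_compatible_Q2
      quad_compatible_Q3 quad_compatible_Q4 quad_compatible_H2 quad_compatible_H3 quad_compatible_A1
      quad_compatible_A2)

lemma vertex_relations_imp_derivative_sum_eq_0:
  fixes Q\<^sub>x Q\<^sub>u Q\<^sub>v Q\<^sub>y :: "'a::field"
  assumes at_u: "Q\<^sub>x * h\<^sub>x\<^sub>u + Q\<^sub>y * h\<^sub>u\<^sub>y = 0" and at_x: "Q\<^sub>u * h\<^sub>x\<^sub>u + Q\<^sub>v * h\<^sub>x\<^sub>v = 0"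
    and "x' * u' = h\<^sub>x\<^sub>u" "u' * y' = h\<^sub>u\<^sub>y" "x' * v' = h\<^sub>x\<^sub>v" "x' \<noteq> 0" "u' \<noteq> 0"
  shows "Q\<^sub>x * x' + Q\<^sub>u * u' + Q\<^sub>v * v' + Q\<^sub>y * y' = 0"
proof -
  have "(Q\<^sub>x * x' + Q\<^sub>u * u' + Q\<^sub>v * v' + Q\<^sub>y * y') * (x' * u')
      = x' * (Q\<^sub>x * (x' * u') + Q\<^sub>y * (u' * y')) + u' * (Q\<^sub>u * (x' * u') + Q\<^sub>v * (x' * v'))"
    by algebra
  also have "\<dots> = 0" using assms(1-5) by simp
  finally show ?thesis using assms(6,7) by simp
qed

theorem proposition10:
  fixes E :: quad_eq and \<delta> g2 g3 a b \<alpha> \<beta> :: "'a::real_normed_field"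
  assumes adm: "quad_admissible E \<delta> g2 g3 a b \<alpha> \<beta>"
  shows
    \<comment> \<open>(i) Q = 0 implies the consistency condition of the system\<close>
    "(\<forall>x u v y :: 'a. quadQ E \<delta> g2 g3 a b \<alpha> \<beta> x u v y = 0 \<longrightarrow>
        quadh E \<delta> g2 g3 a x u \<alpha> * quadh E \<delta> g2 g3 a v y \<alpha>
          = quadh E \<delta> g2 g3 b x v \<beta> * quadh E \<delta> g2 g3 b u y \<beta>)
     \<and>
    \<comment> \<open>(ii) Q = 0 is compatible with the system along (non-degenerate) solutions\<close>
     (\<forall>(x :: 'a \<Rightarrow> 'a) u v y \<xi> dx du dv dy.
        (x has_field_derivative dx) (at \<xi>) \<and> (u has_field_derivative du) (at \<xi>) \<and>
        (v has_field_derivative dv) (at \<xi>) \<and> (y has_field_derivative dy) (at \<xi>) \<and>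
        dx * du = quadh E \<delta> g2 g3 a (x \<xi>) (u \<xi>) \<alpha> \<and>
        du * dy = quadh E \<delta> g2 g3 b (u \<xi>) (y \<xi>) \<beta> \<and>
        dx * dv = quadh E \<delta> g2 g3 b (x \<xi>) (v \<xi>) \<beta> \<and>
        dv * dy = quadh E \<delta> g2 g3 a (v \<xi>) (y \<xi>) \<alpha> \<and>
        dx \<noteq> 0 \<and> du \<noteq> 0 \<and>
        quadQ E \<delta> g2 g3 a b \<alpha> \<beta> (x \<xi>) (u \<xi>) (v \<xi>) (y \<xi>) = 0
        \<longrightarrow>
        deriv (\<lambda>t. quadQ E \<delta> g2 g3 a b \<alpha> \<beta> t (u \<xi>) (v \<xi>) (y \<xi>)) (x \<xi>) * dx
        + deriv (\<lambda>t. quadQ E \<delta> g2 g3 a b \<alpha> \<beta> (x \<xi>) t (v \<xi>) (y \<xi>)) (u \<xi>) * du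
        + deriv (\<lambda>t. quadQ E \<delta> g2 g3 a b \<alpha> \<beta> (x \<xi>) (u \<xi>) t (y \<xi>)) (v \<xi>) * dv
        + deriv (\<lambda>t. quadQ E \<delta> g2 g3 a b \<alpha> \<beta> (x \<xi>) (u \<xi>) (v \<xi>) t) (y \<xi>) * dy = 0)"
proof -
  note compatible = quad_compatible_quadQ[OF adm]
  note at_x = quad_compatible_at_x[OF compatible _ quadQ_reflect quadh_commute quadh_commute]
  show ?thesis
  proof (intro conjI allI impI, goal_cases consistency derivative)
    case (consistency x u v y)
    then show ?case using compatible by (simp add: quad_compatible_def)
  next
    case (derivative x u v y \<xi> dx du dv dy)
    then show ?case
      unfolding deriv_quadQ
      by (intro vertex_relations_imp_derivative_sum_eq_0[where h\<^sub>x\<^sub>u = "quadh E \<delta> g2 g3 a (x \<xi>) (u \<xi>) \<alpha>"])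
        (use compatible at_x in \<open>auto simp: quad_compatible_def\<close>)
  qed
qed

end
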